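(* Let $r\ge2$, $N\ge r-1$, $d\ge1$ be integers. For any function $f\colon\Delta_N\to\mathbb{R}^d$, we have $\delta(\mathrm{Conf}_r^{\Delta}(f))\le\sqrt{r}\cdot\delta(f)$.
   Context: $\Delta_N$ is the geometric $N$-simplex. $\mathrm{Conf}_r^{\Delta}(\Delta_N)=\{(x_1,\dots,x_r)\in(\Delta_N)^{\times r}: \text{the } x_i \text{ lie in pairwise disjoint faces}\}$ with the subspace topology. $W_r^{\oplus d}=\{(z_1,\dots,z_r)\in(\mathbb{R}^d)^{\oplus r}: z_1+\dots+z_r=0\}$ with the Euclidean norm. $\mathrm{Conf}_r^{\Delta}(f)\colon\mathrm{Conf}_r^{\Delta}(\Delta_N)\to W_r^{\oplus d}$ is $(x_1,\dots,x_r)\mapsto\big(f(x_i)-\tfrac1r\sum_{j=1}^rf(x_j)\big)_{i=1}^r$. For a topological space $X$ and a metric space $Y$, $\delta(h)=\inf\{\delta\ge 0 : \text{for every } x\in X \text{ there is an open neighborhood } U_x \text{ of } x \text{ with } \operatorname{diam}(h(U_x))\le\delta\}$. *)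

theory Defs
  imports "HOL-Analysis.Analysis"
begin

text \<open>The type nat => real carries the product topology, which on this set is
  the Euclidean topology of R^(N+1).\<close>
definition geom_simplex :: "nat \<Rightarrow> (nat \<Rightarrow> real) set" where
  "geom_simplex N = {x. (\<forall>i. 0 \<le> x i) \<and> (\<forall>i. N < i \<longrightarrow> x i = 0) \<and> (\<Sum>i\<le>N. x i) = 1}"

definition simplex_face :: "nat \<Rightarrow> nat set \<Rightarrow> (nat \<Rightarrow> real) set" where
  "simplex_face N \<sigma> = {x \<in> geom_simplex N. \<forall>i. i \<notin> \<sigma> \<longrightarrow> x i = 0}"

definition simplex_faces :: "nat \<Rightarrow> (nat \<Rightarrow> real) set set" where
  "simplex_faces N = {simplex_face N \<sigma> | \<sigma>. \<sigma> \<noteq> {} \<and> \<sigma> \<subseteq> {..N}}"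

definition conf :: "nat \<Rightarrow> nat \<Rightarrow> (nat \<Rightarrow> (nat \<Rightarrow> real)) set" where
  "conf r N = {x \<in> {..<r} \<rightarrow>\<^sub>E geom_simplex N.
     \<exists>F. (\<forall>i<r. F i \<in> simplex_faces N \<and> x i \<in> F i) \<and>
         (\<forall>i<r. \<forall>j<r. i \<noteq> j \<longrightarrow> F i \<inter> F j = {})}"

definition conf_top :: "nat \<Rightarrow> nat \<Rightarrow> (nat \<Rightarrow> (nat \<Rightarrow> real)) topology" where
  "conf_top r N = subtopology (product_topology (\<lambda>_. euclidean) {..<r}) (conf r N)"

definition conf_map :: "nat \<Rightarrow> ((nat \<Rightarrow> real) \<Rightarrow> 'a::euclidean_space)
    \<Rightarrow> (nat \<Rightarrow> (nat \<Rightarrow> real)) \<Rightarrow> (nat \<Rightarrow> 'a)" where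
  "conf_map r f x = (\<lambda>i. if i < r then f (x i) - (1 / real r) *\<^sub>R (\<Sum>j<r. f (x j)) else 0)"

definition dist_W :: "nat \<Rightarrow> (nat \<Rightarrow> 'a::euclidean_space) \<Rightarrow> (nat \<Rightarrow> 'a) \<Rightarrow> real" where
  "dist_W r z w = sqrt (\<Sum>i<r. (norm (z i - w i))\<^sup>2)"

definition ediam :: "('b \<Rightarrow> 'b \<Rightarrow> real) \<Rightarrow> 'b set \<Rightarrow> ereal" where
  "ediam dY S = (if S = {} then 0 else (SUP p\<in>S \<times> S. ereal (dY (fst p) (snd p))))"

definition delta :: "'a topology \<Rightarrow> ('b \<Rightarrow> 'b \<Rightarrow> real) \<Rightarrow> ('a \<Rightarrow> 'b) \<Rightarrow> ereal" where
  "delta X dY h = Inf {\<delta>. 0 \<le> \<delta> \<and>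
     (\<forall>x\<in>topspace X. \<exists>U. openin X U \<and> x \<in> U \<and> ediam dY (h ` U) \<le> \<delta>)}"

end

theory Submission
  imports Defs
begin

text \<open>Near a configuration x, take in each coordinate a neighbourhood of x i on which f
  varies by at most \<delta>; their product is a neighbourhood of x in Conf. On it the differences
  f (z i) - f (w i) have norm at most \<delta>, and Conf(f) only subtracts their common mean,
  an orthogonal projection, so the distance in W is at most the Euclidean norm of the
  r-tuple of differences, hence at most sqrt r \<delta>.\<close>

definition delta_bound :: "'a topology \<Rightarrow> ('b \<Rightarrow> 'b \<Rightarrow> real) \<Rightarrow> ('a \<Rightarrow> 'b) \<Rightarrow> ereal \<Rightarrow> bool" where
  "delta_bound X dY h \<delta> \<longleftrightarrow> 0 \<le> \<delta> \<and>
     (\<forall>x\<in>topspace X. \<exists>U. openin X U \<and> x \<in> U \<and> ediam dY (h ` U) \<le> \<delta>)"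

lemma delta_eq_Inf_delta_bound: "delta X dY h = Inf (Collect (delta_bound X dY h))"
  by (simp add: delta_def delta_bound_def[abs_def])

lemma delta_bound_infinity: "delta_bound X dY h \<infinity>"
  by (auto simp: delta_bound_def intro!: exI[of _ "topspace X"])

lemma ediam_le_ereal_iff:
  assumes "0 \<le> e"
  shows "ediam dY S \<le> ereal e \<longleftrightarrow> (\<forall>p\<in>S. \<forall>q\<in>S. dY p q \<le> e)"
  using assms by (auto simp: ediam_def SUP_le_iff)

lemma delta_le_cmult_delta:
  assumes "0 < c"
    and bound: "\<And>e. 0 \<le> e \<Longrightarrow> delta_bound X dY h (ereal e) \<Longrightarrow> delta_bound X' dY' g (ereal (c * e))"
  shows "delta X' dY' g \<le> ereal c * delta X dY h"
proof -
  have scaled: "delta_bound X' dY' g (ereal c * \<delta>)" if "delta_bound X dY h \<delta>" for \<delta>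
  proof (cases \<delta>)
    case (real e)
    then show ?thesis using that bound[of e] by (simp add: delta_bound_def)
  next
    case PInf
    then show ?thesis using \<open>0 < c\<close> delta_bound_infinity by simp
  next
    case MInf
    then show ?thesis using that by (simp add: delta_bound_def)
  qed
  have "delta X' dY' g \<le> Inf {ereal c * \<delta> |\<delta>. delta_bound X dY h \<delta>}"
    unfolding delta_eq_Inf_delta_bound by (rule Inf_superset_mono) (auto intro: scaled)
  also have "\<dots> = ereal c * delta X dY h"
    unfolding delta_eq_Inf_delta_bound using \<open>0 < c\<close> by (rule ereal_Inf_cmult)
  finally show ?thesis .
qed

lemma sum_norm_diff_mean_le:
  fixes a :: "nat \<Rightarrow> 'a::real_inner"
  shows "(\<Sum>i<r. (norm (a i - (1 / real r) *\<^sub>R (\<Sum>j<r. a j)))\<^sup>2) \<le> (\<Sum>i<r. (norm (a i))\<^sup>2)"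
proof (cases "r = 0")
  case False
  define m where "m = (1 / real r) *\<^sub>R (\<Sum>j<r. a j)"
  have sum_eq: "(\<Sum>j<r. a j) = real r *\<^sub>R m"
    using False by (simp add: m_def)
  have "(\<Sum>i<r. (norm (a i - m))\<^sup>2) = (\<Sum>i<r. (norm (a i))\<^sup>2 - 2 * inner (a i) m + (norm m)\<^sup>2)"
    by (intro sum.cong refl)
      (simp add: power2_norm_eq_inner inner_diff_left inner_diff_right inner_commute)
  also have "\<dots> = (\<Sum>i<r. (norm (a i))\<^sup>2) - 2 * inner (\<Sum>j<r. a j) m + real r * (norm m)\<^sup>2"
    by (simp add: sum.distrib sum_subtractf inner_sum_left sum_distrib_left)
  also have "\<dots> = (\<Sum>i<r. (norm (a i))\<^sup>2) - real r * (norm m)\<^sup>2"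
    by (simp add: sum_eq power2_norm_eq_inner)
  also have "\<dots> \<le> (\<Sum>i<r. (norm (a i))\<^sup>2)"
    by simp
  finally show ?thesis
    by (simp add: m_def)
qed simp

lemma conf_map_diff:
  "i < r \<Longrightarrow> conf_map r f z i - conf_map r f w i =
     (f (z i) - f (w i)) - (1 / real r) *\<^sub>R (\<Sum>j<r. f (z j) - f (w j))"
  by (simp add: conf_map_def sum_subtractf scaleR_diff_right algebra_simps)

lemma dist_W_conf_map_le:
  assumes "0 \<le> e" and close: "\<And>i. i < r \<Longrightarrow> dist (f (z i)) (f (w i)) \<le> e"
  shows "dist_W r (conf_map r f z) (conf_map r f w) \<le> sqrt (real r) * e"
proof -
  define a where "a i = f (z i) - f (w i)" for i
  have "dist_W r (conf_map r f z) (conf_map r f w)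
      = sqrt (\<Sum>i<r. (norm (a i - (1 / real r) *\<^sub>R (\<Sum>j<r. a j)))\<^sup>2)"
    unfolding dist_W_def a_def by (simp add: conf_map_diff)
  also have "\<dots> \<le> sqrt (\<Sum>i<r. (norm (a i))\<^sup>2)"
    by (rule real_sqrt_le_mono, rule sum_norm_diff_mean_le)
  also have "\<dots> \<le> sqrt (\<Sum>i<r. e\<^sup>2)"
    using close by (intro real_sqrt_le_mono sum_mono power_mono) (auto simp: a_def dist_norm)
  also have "\<dots> = sqrt (real r) * e"
    using \<open>0 \<le> e\<close> by (simp add: real_sqrt_mult)
  finally show ?thesis .
qed

lemma delta_bound_imp_open_nbhd:
  assumes "delta_bound (subtopology euclidean A) dist f (ereal e)" "y \<in> A"
  obtains V where "open V" "y \<in> V" "\<And>u v. u \<in> A \<inter> V \<Longrightarrow> v \<in> A \<inter> V \<Longrightarrow> dist (f u) (f v) \<le> e"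
proof -
  from assms obtain U where U: "openin (subtopology euclidean A) U" "y \<in> U" "ediam dist (f ` U) \<le> ereal e"
    and "0 \<le> e" by (auto simp: delta_bound_def)
  moreover from U(1) obtain V where "open V" "U = A \<inter> V"
    by (auto simp: openin_open)
  ultimately show ?thesis
    using that by (auto simp: ediam_le_ereal_iff)
qed

lemma delta_bound_conf_map:
  assumes "delta_bound (subtopology euclidean (geom_simplex N)) dist f (ereal e)"
  shows "delta_bound (conf_top r N) (dist_W r) (conf_map r f) (ereal (sqrt (real r) * e))"
  unfolding delta_bound_def
proof (intro conjI ballI)
  have "0 \<le> e" using assms by (simp add: delta_bound_def)
  then show "0 \<le> ereal (sqrt (real r) * e)" by simp
  fix x assume "x \<in> topspace (conf_top r N)"
  then have x: "x \<in> conf r N" by (simp add: conf_top_def)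
  then have "x i \<in> geom_simplex N" if "i < r" for i
    using that by (auto simp: conf_def PiE_iff)
  then have "\<forall>i<r. \<exists>V. open V \<and> x i \<in> V \<and>
      (\<forall>u\<in>geom_simplex N \<inter> V. \<forall>v\<in>geom_simplex N \<inter> V. dist (f u) (f v) \<le> e)"
    by (metis assms delta_bound_imp_open_nbhd)
  then obtain V where V: "\<And>i. i < r \<Longrightarrow> open (V i) \<and> x i \<in> V i \<and>
      (\<forall>u\<in>geom_simplex N \<inter> V i. \<forall>v\<in>geom_simplex N \<inter> V i. dist (f u) (f v) \<le> e)"
    by metis
  define U where "U = PiE {..<r} V \<inter> conf r N"
  have "openin (product_topology (\<lambda>_. euclidean) {..<r}) (PiE {..<r} V)"
    using V by (simp add: openin_PiE_gen)
  then have "openin (conf_top r N) U"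
    unfolding conf_top_def U_def by (auto simp: openin_subtopology)
  moreover have "x \<in> U"
    using x V unfolding U_def by (auto simp: conf_def PiE_iff)
  moreover have "dist_W r (conf_map r f z) (conf_map r f w) \<le> sqrt (real r) * e"
    if "z \<in> U" "w \<in> U" for z w
  proof (rule dist_W_conf_map_le[OF \<open>0 \<le> e\<close>])
    fix i assume "i < r"
    then have "z i \<in> geom_simplex N \<inter> V i" "w i \<in> geom_simplex N \<inter> V i"
      using that unfolding U_def by (auto simp: conf_def PiE_iff)
    then show "dist (f (z i)) (f (w i)) \<le> e"
      using V[OF \<open>i < r\<close>] by blast
  qed
  ultimately show "\<exists>U. openin (conf_top r N) U \<and> x \<in> U \<and>
      ediam (dist_W r) (conf_map r f ` U) \<le> ereal (sqrt (real r) * e)"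
    using \<open>0 \<le> e\<close> by (intro exI[of _ U]) (auto simp: ediam_le_ereal_iff)
qed

theorem lemma4p11:
  fixes r N :: nat and f :: "(nat \<Rightarrow> real) \<Rightarrow> 'a::euclidean_space"
  assumes "2 \<le> r" and "r - 1 \<le> N"
  shows "delta (conf_top r N) (dist_W r) (conf_map r f)
           \<le> ereal (sqrt (real r)) * delta (subtopology euclidean (geom_simplex N)) dist f"
  using assms(1) by (intro delta_le_cmult_delta delta_bound_conf_map) simp

end
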